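(* Let $n \ge 2$, let $\lambda_1,\ldots,\lambda_n \in \mathbb{C}$, let $F$ be the $n$-by-$n$ discrete Fourier transform matrix, i.e. $f_{ij} = \omega^{(i-1)(j-1)}/\sqrt{n}$ with $\omega := \exp(-2\pi i/n)$, let $D = \operatorname{diag}(\lambda_1,\ldots,\lambda_n)$, and let $A = FDF^\ast$. Then for each $k \in \{1,\ldots,n\}$, the field of values $F(A_{(k)})$ is inscribed in the polygon $\partial \operatorname{co}(\lambda_1,\ldots,\lambda_n)$, and the points of tangency (the points where $F(A_{(k)})$ meets the sides of this polygon) occur at the midpoints of the sides of $\partial\operatorname{co}(\lambda_1,\ldots,\lambda_n)$.
   Context: For $B \in \mathsf{M}_m(\mathbb{C})$, the field of values is $F(B) = \{x^\ast B x : x \in \mathbb{C}^m,\ x^\ast x = 1\}$. $A_{(k)}$ denotes the $(n-1)$-by-$(n-1)$ principal submatrix of $A$ obtained by deleting its $k$th row and column. $\operatorname{co}$ denotes convex hull. Label the vertices of the convex polygon $\operatorname{co}(\lambda_1,\ldots,\lambda_n)$ consecutively along its boundary as $\mu_1,\ldots,\mu_d$, so that its sides are $\operatorname{co}(\mu_j,\mu_{j+1})$, $j=1,\ldots,d$, with $\mu_{d+1} := \mu_1$. A set $G$ is inscribed in the polygon if $G \cap \operatorname{co}(\mu_j,\mu_{j+1}) \neq \emptyset$ for all $j \in \{1,\ldots,d\}$. *)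

theory Defs
  imports "HOL-Analysis.Analysis"
begin

text \<open>Matrices are represented as functions nat => nat => complex, with an explicit
  size m; indices run over 0..m-1 (0-based, so the paper's index i corresponds to i-1).\<close>

definition field_of_values :: "nat \<Rightarrow> (nat \<Rightarrow> nat \<Rightarrow> complex) \<Rightarrow> complex set" where
  "field_of_values m B =
     {(\<Sum>i<m. \<Sum>j<m. cnj (x i) * B i j * x j) | x :: nat \<Rightarrow> complex.
        (\<Sum>i<m. (cmod (x i))\<^sup>2) = 1}"

definition dft_omega :: "nat \<Rightarrow> complex" where
  "dft_omega n = exp (- 2 * of_real pi * \<i> / of_nat n)"

definition dft_matrix :: "nat \<Rightarrow> nat \<Rightarrow> nat \<Rightarrow> complex" where
  "dft_matrix n i j = dft_omega n ^ (i * j) / of_real (sqrt (real n))"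

definition dft_conj_diag :: "nat \<Rightarrow> (nat \<Rightarrow> complex) \<Rightarrow> nat \<Rightarrow> nat \<Rightarrow> complex" where
  "dft_conj_diag n lam i j =
     (\<Sum>l<n. dft_matrix n i l * lam l * cnj (dft_matrix n j l))"

definition delete_rc :: "nat \<Rightarrow> (nat \<Rightarrow> nat \<Rightarrow> complex) \<Rightarrow> nat \<Rightarrow> nat \<Rightarrow> complex" where
  "delete_rc k B i j = B (if i < k then i else Suc i) (if j < k then j else Suc j)"

text \<open>co(a,b) is a side of the convex polygon P (a convex hull of finitely many points):
  a and b are vertices (extreme points) of P, the segment between them is a face of P,
  and a = b only in the degenerate case where P is a single point (d = 1).\<close>
definition polygon_side :: "complex set \<Rightarrow> complex \<Rightarrow> complex \<Rightarrow> bool" where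
  "polygon_side P a b \<longleftrightarrow>
     a extreme_point_of P \<and> b extreme_point_of P \<and> closed_segment a b face_of P \<and>
     (a = b \<longrightarrow> P = {a})"

end

theory Submission
  imports Defs
begin

text \<open>
  Write \<open>U\<close> for the DFT matrix, so that \<open>A = U D U\<^sup>*\<close>. Substituting \<open>z = U\<^sup>* y\<close>,
  the quadratic form \<open>y\<^sup>* A y\<close> becomes \<open>\<Sum>\<^sub>l |z\<^sub>l|\<^sup>2 \<lambda>\<^sub>l\<close>, and \<open>y\<^sub>k = 0\<close> becomes \<open>(U z)\<^sub>k = 0\<close>.
  Hence \<open>F(A\<^sub>(\<^sub>k\<^sub>))\<close> is the set of convex combinations \<open>\<Sum>\<^sub>l |z\<^sub>l|\<^sup>2 \<lambda>\<^sub>l\<close> over unit vectors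
  \<open>z\<close> with \<open>(U z)\<^sub>k = 0\<close>. All entries of row \<open>k\<close> of \<open>U\<close> have modulus \<open>1/\<surd>n\<close>.
  So for any two indices \<open>i \<noteq> j\<close> a vector \<open>z\<close> supported on \<open>{i, j}\<close> with
  \<open>|z\<^sub>i| = |z\<^sub>j|\<close> and suitable phases meets the constraint, and this gives the midpoint of
  \<open>\<lambda>\<^sub>i\<close> and \<open>\<lambda>\<^sub>j\<close>. Conversely, a side of the polygon is a face of it, so a combination
  lying on a side puts positive weight only on eigenvalues on that side. If exactly two
  eigenvalues lie on the side, the constraint forces their weights to be equal, so the point
  is the midpoint.
\<close>

section \<open>Compressions of unitary similarities of diagonal matrices\<close>

text \<open>Both \<open>U U\<^sup>* = I\<close> and \<open>U\<^sup>* U = I\<close> are required.\<close>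
definition unitary_mat :: "nat \<Rightarrow> (nat \<Rightarrow> nat \<Rightarrow> complex) \<Rightarrow> bool" where
  "unitary_mat n U \<longleftrightarrow>
     (\<forall>i<n. \<forall>j<n. (\<Sum>l<n. U i l * cnj (U j l)) = of_bool (i = j) \<and>
                   (\<Sum>l<n. cnj (U l i) * U l j) = of_bool (i = j))"

definition conj_diag :: "nat \<Rightarrow> (nat \<Rightarrow> nat \<Rightarrow> complex) \<Rightarrow> (nat \<Rightarrow> complex) \<Rightarrow> nat \<Rightarrow> nat \<Rightarrow> complex" where
  "conj_diag n U lam i j = (\<Sum>l<n. U i l * lam l * cnj (U j l))"

definition mat_vec :: "nat \<Rightarrow> (nat \<Rightarrow> nat \<Rightarrow> complex) \<Rightarrow> (nat \<Rightarrow> complex) \<Rightarrow> nat \<Rightarrow> complex" where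
  "mat_vec n U z i = (\<Sum>l<n. U i l * z l)"

definition adj_vec :: "nat \<Rightarrow> (nat \<Rightarrow> nat \<Rightarrow> complex) \<Rightarrow> (nat \<Rightarrow> complex) \<Rightarrow> nat \<Rightarrow> complex" where
  "adj_vec n U y l = (\<Sum>i<n. cnj (U i l) * y i)"

lemma mat_vec_adj_vec:
  assumes "unitary_mat n U" "i < n"
  shows "mat_vec n U (adj_vec n U y) i = y i"
proof -
  have "mat_vec n U (adj_vec n U y) i = (\<Sum>l<n. \<Sum>s<n. U i l * cnj (U s l) * y s)"
    unfolding mat_vec_def adj_vec_def by (simp add: sum_distrib_left mult.assoc)
  also have "\<dots> = (\<Sum>s<n. (\<Sum>l<n. U i l * cnj (U s l)) * y s)"
    by (subst sum.swap) (simp add: sum_distrib_right)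
  also have "\<dots> = (\<Sum>s<n. of_bool (i = s) * y s)"
    using assms unfolding unitary_mat_def by (intro sum.cong) auto
  finally show ?thesis using assms(2) by simp
qed

lemma adj_vec_mat_vec:
  assumes "unitary_mat n U" "l < n"
  shows "adj_vec n U (mat_vec n U z) l = z l"
proof -
  have "adj_vec n U (mat_vec n U z) l = (\<Sum>i<n. \<Sum>s<n. cnj (U i l) * U i s * z s)"
    unfolding mat_vec_def adj_vec_def by (simp add: sum_distrib_left mult.assoc)
  also have "\<dots> = (\<Sum>s<n. (\<Sum>i<n. cnj (U i l) * U i s) * z s)"
    by (subst sum.swap) (simp add: sum_distrib_right)
  also have "\<dots> = (\<Sum>s<n. of_bool (l = s) * z s)"
    using assms unfolding unitary_mat_def by (intro sum.cong) auto
  finally show ?thesis using assms(2) by simp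
qed

lemma quadratic_form_conj_diag:
  "(\<Sum>i<n. \<Sum>j<n. cnj (y i) * conj_diag n U lam i j * y j) =
     (\<Sum>l<n. (cmod (adj_vec n U y l))\<^sup>2 *\<^sub>R lam l)"
proof -
  have "(cmod (adj_vec n U y l))\<^sup>2 *\<^sub>R lam l =
          (\<Sum>i<n. \<Sum>j<n. cnj (y i) * (U i l * lam l * cnj (U j l)) * y j)" for l
  proof -
    have "(cmod (adj_vec n U y l))\<^sup>2 *\<^sub>R lam l = cnj (adj_vec n U y l) * adj_vec n U y l * lam l"
      by (simp only: scaleR_conv_of_real complex_norm_square mult.commute)
    also have "\<dots> = (\<Sum>i<n. \<Sum>j<n. (U i l * cnj (y i)) * (cnj (U j l) * y j)) * lam l"
      unfolding adj_vec_def by (simp add: sum_product)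
    also have "\<dots> = (\<Sum>i<n. \<Sum>j<n. cnj (y i) * (U i l * lam l * cnj (U j l)) * y j)"
      unfolding sum_distrib_right by (intro sum.cong refl) (simp add: mult_ac)
    finally show ?thesis .
  qed
  then have "(\<Sum>l<n. (cmod (adj_vec n U y l))\<^sup>2 *\<^sub>R lam l) =
               (\<Sum>l<n. \<Sum>i<n. \<Sum>j<n. cnj (y i) * (U i l * lam l * cnj (U j l)) * y j)"
    by simp
  also have "\<dots> = (\<Sum>i<n. \<Sum>l<n. \<Sum>j<n. cnj (y i) * (U i l * lam l * cnj (U j l)) * y j)"
    by (rule sum.swap)
  also have "\<dots> = (\<Sum>i<n. \<Sum>j<n. \<Sum>l<n. cnj (y i) * (U i l * lam l * cnj (U j l)) * y j)"
    by (rule sum.cong[OF refl], rule sum.swap)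
  also have "\<dots> = (\<Sum>i<n. \<Sum>j<n. cnj (y i) * conj_diag n U lam i j * y j)"
    unfolding conj_diag_def by (simp add: sum_distrib_left sum_distrib_right)
  finally show ?thesis ..
qed

lemma norm_adj_vec:
  assumes "unitary_mat n U"
  shows "(\<Sum>l<n. (cmod (adj_vec n U y l))\<^sup>2) = (\<Sum>i<n. (cmod (y i))\<^sup>2)"
proof -
  have "(\<Sum>j<n. cnj (y i) * conj_diag n U (\<lambda>_. 1) i j * y j) = (cmod (y i))\<^sup>2 *\<^sub>R 1"
    if "i < n" for i
  proof -
    have "(\<Sum>j<n. cnj (y i) * conj_diag n U (\<lambda>_. 1) i j * y j) = (\<Sum>j<n. of_bool (i = j) * (cnj (y i) * y j))"
      using assms that unfolding unitary_mat_def conj_diag_def by (intro sum.cong) auto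
    also have "\<dots> = cnj (y i) * y i"
      using that by simp
    also have "\<dots> = (cmod (y i))\<^sup>2 *\<^sub>R 1"
      by (simp only: scaleR_conv_of_real mult_1_right mult_1_left complex_norm_square mult.commute)
    finally show ?thesis .
  qed
  then have "(\<Sum>l<n. (cmod (adj_vec n U y l))\<^sup>2 *\<^sub>R (1::complex)) = (\<Sum>i<n. (cmod (y i))\<^sup>2 *\<^sub>R 1)"
    unfolding quadratic_form_conj_diag [symmetric] by (intro sum.cong) auto
  then show ?thesis
    by (simp flip: scaleR_sum_left)
qed

lemma sum_skip_index:
  assumes "k < n" "h k = 0"
  shows "(\<Sum>i<n - 1. h (if i < k then i else Suc i)) = (\<Sum>i<n. h i :: 'a::comm_monoid_add)"
proof -
  have "bij_betw (\<lambda>i. if i < k then i else Suc i) {..<n - 1} ({..<n} - {k})"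
    by (rule bij_betw_byWitness[where f' = "\<lambda>i. if i < k then i else i - 1"]) (use assms in auto)
  then have "(\<Sum>i<n - 1. h (if i < k then i else Suc i)) = (\<Sum>i\<in>{..<n} - {k}. h i)"
    by (rule sum.reindex_bij_betw)
  also have "\<dots> = (\<Sum>i<n. h i)"
    using assms by (simp add: sum.remove[of "{..<n}" k])
  finally show ?thesis .
qed

lemma field_of_values_delete_rc:
  assumes "k < n"
  shows "field_of_values (n - 1) (delete_rc k B) =
           {\<Sum>i<n. \<Sum>j<n. cnj (y i) * B i j * y j | y. y k = 0 \<and> (\<Sum>i<n. (cmod (y i))\<^sup>2) = 1}"
proof -
  define skip where "skip i = (if i < k then i else Suc i)" for i
  have skip_sums:
    "(\<Sum>i<n - 1. \<Sum>j<n - 1. cnj (y (skip i)) * delete_rc k B i j * y (skip j)) =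
       (\<Sum>i<n. \<Sum>j<n. cnj (y i) * B i j * y j) \<and>
     (\<Sum>i<n - 1. (cmod (y (skip i)))\<^sup>2) = (\<Sum>i<n. (cmod (y i))\<^sup>2)"
    if "y k = 0" for y
  proof
    have "(\<Sum>i<n - 1. \<Sum>j<n - 1. cnj (y (skip i)) * delete_rc k B i j * y (skip j)) =
            (\<Sum>i<n - 1. \<Sum>j<n. cnj (y (skip i)) * B (skip i) j * y j)"
      unfolding delete_rc_def skip_def using that
      by (intro sum.cong refl sum_skip_index[OF assms, of "\<lambda>j. cnj (y _) * B _ j * y j"]) simp
    also have "\<dots> = (\<Sum>i<n. \<Sum>j<n. cnj (y i) * B i j * y j)"
      unfolding skip_def using that
      by (intro sum_skip_index[OF assms, of "\<lambda>i. \<Sum>j<n. cnj (y i) * B i j * y j"]) simp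
    finally show "(\<Sum>i<n - 1. \<Sum>j<n - 1. cnj (y (skip i)) * delete_rc k B i j * y (skip j)) =
                    (\<Sum>i<n. \<Sum>j<n. cnj (y i) * B i j * y j)" .
    show "(\<Sum>i<n - 1. (cmod (y (skip i)))\<^sup>2) = (\<Sum>i<n. (cmod (y i))\<^sup>2)"
      unfolding skip_def using that
      by (intro sum_skip_index[OF assms, of "\<lambda>i. (cmod (y i))\<^sup>2"]) simp
  qed
  show ?thesis
  proof (intro set_eqI iffI)
    fix w assume "w \<in> field_of_values (n - 1) (delete_rc k B)"
    then obtain x where w: "w = (\<Sum>i<n - 1. \<Sum>j<n - 1. cnj (x i) * delete_rc k B i j * x j)"
      and x: "(\<Sum>i<n - 1. (cmod (x i))\<^sup>2) = 1"
      unfolding field_of_values_def by blast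
    define y where "y i = (if i = k then 0 else x (if i < k then i else i - 1))" for i
    have "y k = 0" and "y (skip i) = x i" for i
      unfolding y_def skip_def by auto
    with skip_sums[of y] w x show "w \<in> {\<Sum>i<n. \<Sum>j<n. cnj (y i) * B i j * y j | y. y k = 0 \<and> (\<Sum>i<n. (cmod (y i))\<^sup>2) = 1}"
      by auto
  next
    fix w assume "w \<in> {\<Sum>i<n. \<Sum>j<n. cnj (y i) * B i j * y j | y. y k = 0 \<and> (\<Sum>i<n. (cmod (y i))\<^sup>2) = 1}"
    then obtain y where "y k = 0" "(\<Sum>i<n. (cmod (y i))\<^sup>2) = 1"
      and "w = (\<Sum>i<n. \<Sum>j<n. cnj (y i) * B i j * y j)"
      by blast
    with skip_sums[of y] show "w \<in> field_of_values (n - 1) (delete_rc k B)"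
      unfolding field_of_values_def by (auto intro!: exI[of _ "y \<circ> skip"])
  qed
qed

lemma field_of_values_compression:
  assumes U: "unitary_mat n U" and "k < n"
  shows "field_of_values (n - 1) (delete_rc k (conj_diag n U lam)) =
           {\<Sum>l<n. (cmod (z l))\<^sup>2 *\<^sub>R lam l | z. (\<Sum>l<n. (cmod (z l))\<^sup>2) = 1 \<and> mat_vec n U z k = 0}"
  unfolding field_of_values_delete_rc[OF \<open>k < n\<close>] quadratic_form_conj_diag
proof (intro set_eqI iffI)
  fix w assume "w \<in> {\<Sum>l<n. (cmod (adj_vec n U y l))\<^sup>2 *\<^sub>R lam l | y. y k = 0 \<and> (\<Sum>i<n. (cmod (y i))\<^sup>2) = 1}"
  then obtain y where "y k = 0" "(\<Sum>i<n. (cmod (y i))\<^sup>2) = 1"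
    and "w = (\<Sum>l<n. (cmod (adj_vec n U y l))\<^sup>2 *\<^sub>R lam l)"
    by blast
  moreover have "mat_vec n U (adj_vec n U y) k = y k"
    using U \<open>k < n\<close> by (rule mat_vec_adj_vec)
  ultimately show "w \<in> {\<Sum>l<n. (cmod (z l))\<^sup>2 *\<^sub>R lam l | z. (\<Sum>l<n. (cmod (z l))\<^sup>2) = 1 \<and> mat_vec n U z k = 0}"
    using norm_adj_vec[OF U, of y] by auto
next
  fix w assume "w \<in> {\<Sum>l<n. (cmod (z l))\<^sup>2 *\<^sub>R lam l | z. (\<Sum>l<n. (cmod (z l))\<^sup>2) = 1 \<and> mat_vec n U z k = 0}"
  then obtain z where z: "(\<Sum>l<n. (cmod (z l))\<^sup>2) = 1" "mat_vec n U z k = 0"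
    and w: "w = (\<Sum>l<n. (cmod (z l))\<^sup>2 *\<^sub>R lam l)"
    by blast
  define y where "y = mat_vec n U z"
  have adj_y: "adj_vec n U y l = z l" if "l < n" for l
    unfolding y_def using U that by (rule adj_vec_mat_vec)
  have "(\<Sum>i<n. (cmod (y i))\<^sup>2) = 1"
    using norm_adj_vec[OF U, of y] z(1) adj_y by simp
  moreover have "w = (\<Sum>l<n. (cmod (adj_vec n U y l))\<^sup>2 *\<^sub>R lam l)"
    unfolding w using adj_y by simp
  ultimately show "w \<in> {\<Sum>l<n. (cmod (adj_vec n U y l))\<^sup>2 *\<^sub>R lam l | y. y k = 0 \<and> (\<Sum>i<n. (cmod (y i))\<^sup>2) = 1}"
    using z(2) unfolding y_def by blast
qed

lemma sum_lessThan_two_support: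
  fixes i j n :: nat
  assumes "i < n" "j < n" "i \<noteq> j" "\<And>l. l < n \<Longrightarrow> l \<noteq> i \<Longrightarrow> l \<noteq> j \<Longrightarrow> f l = 0"
  shows "(\<Sum>l<n. f l) = f i + (f j :: 'a::comm_monoid_add)"
proof -
  have "(\<Sum>l\<in>{i, j}. f l) = (\<Sum>l<n. f l)"
    by (rule sum.mono_neutral_left[OF finite_lessThan]) (use assms in auto)
  then show ?thesis
    using \<open>i \<noteq> j\<close> by simp
qed

lemma weighted_sum_two_support_eq_midpoint:
  assumes ij: "i < n" "j < n" "i \<noteq> j" and "U k i \<noteq> 0" "cmod (U k i) = cmod (U k j)"
    and z: "(\<Sum>l<n. (cmod (z l))\<^sup>2) = 1" "mat_vec n U z k = 0"
    and supp: "\<And>l. l < n \<Longrightarrow> l \<noteq> i \<Longrightarrow> l \<noteq> j \<Longrightarrow> z l = 0"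
  shows "(\<Sum>l<n. (cmod (z l))\<^sup>2 *\<^sub>R lam l) = midpoint (lam i) (lam j)"
proof -
  have "U k i * z i + U k j * z j = 0"
    using z(2) sum_lessThan_two_support[OF ij, of "\<lambda>l. U k l * z l"] supp
    by (simp add: mat_vec_def)
  then have "cmod (U k i) * cmod (z i) = cmod (U k j) * cmod (z j)"
    by (metis add_eq_0_iff norm_minus_cancel norm_mult)
  with assms(4,5) have "cmod (z i) = cmod (z j)"
    by (metis mult_cancel_left norm_eq_zero)
  moreover have "(cmod (z i))\<^sup>2 + (cmod (z j))\<^sup>2 = 1"
    using z(1) sum_lessThan_two_support[OF ij, of "\<lambda>l. (cmod (z l))\<^sup>2"] supp by simp
  ultimately have half: "(cmod (z i))\<^sup>2 = 1 / 2" "(cmod (z j))\<^sup>2 = 1 / 2"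
    by simp_all
  have "(\<Sum>l<n. (cmod (z l))\<^sup>2 *\<^sub>R lam l) = (cmod (z i))\<^sup>2 *\<^sub>R lam i + (cmod (z j))\<^sup>2 *\<^sub>R lam j"
    using supp by (intro sum_lessThan_two_support[OF ij]) simp
  then show ?thesis
    unfolding half midpoint_def by (simp add: scaleR_add_right)
qed

lemma midpoint_mem_field_of_values_compression:
  assumes U: "unitary_mat n U" and "k < n"
    and ij: "i < n" "j < n" "i \<noteq> j" and "U k i \<noteq> 0" "cmod (U k i) = cmod (U k j)"
  shows "midpoint (lam i) (lam j) \<in> field_of_values (n - 1) (delete_rc k (conj_diag n U lam))"
proof -
  have "U k j \<noteq> 0"
    using assms(6,7) by auto
  define c where "c = - U k i / U k j"
  define z where "z l = (of_bool (l = i) + of_bool (l = j) * c) / sqrt 2" for l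
  have "cmod c = 1"
    using assms(7) \<open>U k j \<noteq> 0\<close> by (simp add: c_def norm_divide)
  have supp: "z l = 0" if "l \<noteq> i" "l \<noteq> j" for l
    using that by (simp add: z_def)
  have "mat_vec n U z k = U k i * z i + U k j * z j"
    unfolding mat_vec_def using supp by (intro sum_lessThan_two_support[OF ij]) simp
  also have "\<dots> = 0"
    using \<open>i \<noteq> j\<close> \<open>U k j \<noteq> 0\<close> by (simp add: z_def c_def field_simps)
  finally have orth: "mat_vec n U z k = 0" .
  have "(\<Sum>l<n. (cmod (z l))\<^sup>2) = (cmod (z i))\<^sup>2 + (cmod (z j))\<^sup>2"
    using supp by (intro sum_lessThan_two_support[OF ij]) simp
  also have "\<dots> = 1"
    using \<open>i \<noteq> j\<close> \<open>cmod c = 1\<close> by (simp add: z_def norm_divide power_divide)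
  finally have unit: "(\<Sum>l<n. (cmod (z l))\<^sup>2) = 1" .
  have "midpoint (lam i) (lam j) = (\<Sum>l<n. (cmod (z l))\<^sup>2 *\<^sub>R lam l)"
    by (rule sym, rule weighted_sum_two_support_eq_midpoint[OF ij assms(6,7) unit orth supp])
  with unit orth show ?thesis
    unfolding field_of_values_compression[OF U \<open>k < n\<close>] by blast
qed

section \<open>Sides of the eigenvalue polygon\<close>

lemma face_of_convex_sum_support:
  fixes v :: "'i \<Rightarrow> 'a::real_vector"
  assumes T: "T face_of C" and "convex C" and "finite I"
    and p: "\<And>l. l \<in> I \<Longrightarrow> p l \<ge> 0" "sum p I = 1"
    and v: "\<And>l. l \<in> I \<Longrightarrow> v l \<in> C"
    and w: "(\<Sum>l\<in>I. p l *\<^sub>R v l) \<in> T" and "j \<in> I" "p j > 0"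
  shows "v j \<in> T"
proof -
  define q where "q = p j"
  define J where "J = I - {j}"
  have "finite J" and pJ: "\<And>l. l \<in> J \<Longrightarrow> p l \<ge> 0"
    using \<open>finite I\<close> p(1) by (auto simp: J_def)
  have sum_J: "sum p J = 1 - q"
    using sum.remove[OF \<open>finite I\<close> \<open>j \<in> I\<close>, of p] p(2) by (simp add: J_def q_def)
  have w_split: "(\<Sum>l\<in>I. p l *\<^sub>R v l) = q *\<^sub>R v j + (\<Sum>l\<in>J. p l *\<^sub>R v l)"
    using sum.remove[OF \<open>finite I\<close> \<open>j \<in> I\<close>] by (simp add: J_def q_def)
  show ?thesis
  proof (cases "q = 1")
    case True
    then have "\<forall>l\<in>J. p l = 0"
      using sum_J sum_nonneg_eq_0_iff[OF \<open>finite J\<close>] pJ by auto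
    then show ?thesis
      using w w_split True by simp
  next
    case False
    with sum_J have "q < 1"
      using sum_nonneg[of J p] pJ by force
    \<comment> \<open>the sum lies on the segment from \<open>v j\<close> to the renormalised rest \<open>u \<in> C\<close>\<close>
    define u where "u = (\<Sum>l\<in>J. (p l / (1 - q)) *\<^sub>R v l)"
    have "u \<in> C"
      unfolding u_def using \<open>convex C\<close> \<open>finite J\<close> \<open>q < 1\<close> sum_J pJ v
      by (intro convex_sum) (auto simp: J_def simp flip: sum_divide_distrib)
    have "(1 - q) *\<^sub>R u = (\<Sum>l\<in>J. p l *\<^sub>R v l)"
      unfolding u_def scaleR_sum_right using \<open>q < 1\<close> by (intro sum.cong) auto
    then have w_seg: "(\<Sum>l\<in>I. p l *\<^sub>R v l) = (1 - q) *\<^sub>R u + q *\<^sub>R v j"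
      using w_split by simp
    show ?thesis
    proof (cases "u = v j")
      case True
      then show ?thesis
        using w w_seg by (simp flip: scaleR_add_left)
    next
      case False
      with \<open>q < 1\<close> \<open>p j > 0\<close> have "(\<Sum>l\<in>I. p l *\<^sub>R v l) \<in> open_segment u (v j)"
        unfolding w_seg in_segment q_def by auto
      then show ?thesis
        using face_ofD[OF T _ \<open>u \<in> C\<close> v[OF \<open>j \<in> I\<close>] w] by blast
    qed
  qed
qed

lemma midpoint_eq_midpoint_of_endpoints:
  assumes "a \<in> {x, y}" "b \<in> {x, y}" "x \<in> closed_segment a b" "y \<in> closed_segment a b"
  shows "midpoint x y = midpoint a b"
proof (cases "a = b")
  case True
  with assms(3,4) show ?thesis
    by simp
next
  case False
  with assms(1,2) have "(x = a \<and> y = b) \<or> (x = b \<and> y = a)"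
    by auto
  then show ?thesis
    by (auto simp: midpoint_sym)
qed

lemma polygon_side_vertices:
  fixes n :: nat
  assumes "polygon_side (convex hull (lam ` {..<n})) a b"
  shows "a \<in> lam ` {..<n}" "b \<in> lam ` {..<n}"
  using assms extreme_point_of_convex_hull unfolding polygon_side_def by blast+

lemma polygon_side_obtain_indices:
  fixes n :: nat
  assumes "2 \<le> n" and side: "polygon_side (convex hull (lam ` {..<n})) a b"
  obtains i j where "i < n" "j < n" "i \<noteq> j" "lam i = a" "lam j = b"
proof -
  obtain i where i: "i < n" "lam i = a"
    using polygon_side_vertices(1)[OF side] by blast
  show ?thesis
  proof (cases "a = b")
    case True
    \<comment> \<open>a degenerate side: all eigenvalues coincide, and any second index will do\<close>
    define j where "j = (if i = 0 then 1 else 0 :: nat)"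
    have "j < n" "j \<noteq> i"
      using \<open>2 \<le> n\<close> by (auto simp: j_def)
    moreover have "convex hull (lam ` {..<n}) = {a}"
      using side True unfolding polygon_side_def by blast
    then have "lam j = b"
      using \<open>j < n\<close> True hull_inc[of "lam j" "lam ` {..<n}" convex] by auto
    ultimately show ?thesis
      using that i by metis
  next
    case False
    obtain j where "j < n" "lam j = b"
      using polygon_side_vertices(2)[OF side] by blast
    with False i that show ?thesis
      by metis
  qed
qed

lemma midpoint_side_mem_field_of_values_compression:
  assumes U: "unitary_mat n U" and "2 \<le> n" "k < n"
    and flat: "\<And>l. l < n \<Longrightarrow> cmod (U k l) = 1 / sqrt n"
    and side: "polygon_side (convex hull (lam ` {..<n})) a b"
  shows "midpoint a b \<in> field_of_values (n - 1) (delete_rc k (conj_diag n U lam))"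
proof -
  obtain i j where ij: "i < n" "j < n" "i \<noteq> j" and "lam i = a" "lam j = b"
    using polygon_side_obtain_indices[OF \<open>2 \<le> n\<close> side] .
  moreover have "U k i \<noteq> 0" "cmod (U k i) = cmod (U k j)"
    using flat[of i] flat[of j] ij \<open>2 \<le> n\<close> by auto
  ultimately show ?thesis
    using midpoint_mem_field_of_values_compression[OF U \<open>k < n\<close> ij] by blast
qed

lemma polygon_side_convex_sum_support:
  fixes n :: nat
  assumes side: "polygon_side (convex hull (lam ` {..<n})) a b"
    and p: "\<And>l. l < n \<Longrightarrow> p l \<ge> 0" "(\<Sum>l<n. p l) = 1"
    and on_side: "(\<Sum>l<n. p l *\<^sub>R lam l) \<in> closed_segment a b" and "l < n" "p l > 0"
  shows "lam l \<in> closed_segment a b"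
proof -
  have "closed_segment a b face_of convex hull (lam ` {..<n})"
    using side unfolding polygon_side_def by blast
  then show ?thesis
    by (rule face_of_convex_sum_support[OF _ convex_convex_hull finite_lessThan, where p = p])
       (use p on_side \<open>l < n\<close> \<open>p l > 0\<close> in \<open>auto simp: hull_inc\<close>)
qed

lemma polygon_side_midpoint_of_two_vertices:
  fixes n :: nat
  assumes side: "polygon_side (convex hull (lam ` {..<n})) a b"
    and on_side: "{l. l < n \<and> lam l \<in> closed_segment a b} = {i, j}"
  shows "midpoint (lam i) (lam j) = midpoint a b"
proof (rule midpoint_eq_midpoint_of_endpoints)
  have "x \<in> {lam i, lam j}" if vertex: "x \<in> lam ` {..<n}" and on_seg: "x \<in> closed_segment a b" for x
  proof -
    obtain l where "l < n" "x = lam l"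
      using vertex by blast
    with on_seg have "l \<in> {i, j}"
      unfolding on_side [symmetric] by simp
    with \<open>x = lam l\<close> show ?thesis
      by blast
  qed
  then show "a \<in> {lam i, lam j}" "b \<in> {lam i, lam j}"
    using polygon_side_vertices[OF side] by simp_all
  show "lam i \<in> closed_segment a b" "lam j \<in> closed_segment a b"
    using on_side by blast+
qed

lemma field_of_values_compression_inter_side:
  assumes U: "unitary_mat n U" and "2 \<le> n" "k < n"
    and flat: "\<And>l. l < n \<Longrightarrow> cmod (U k l) = 1 / sqrt n"
    and side: "polygon_side (convex hull (lam ` {..<n})) a b"
    and two: "card {l. l < n \<and> lam l \<in> closed_segment a b} = 2"
  shows "field_of_values (n - 1) (delete_rc k (conj_diag n U lam)) \<inter> closed_segment a b = {midpoint a b}"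
proof (intro equalityI subsetI)
  fix w assume "w \<in> field_of_values (n - 1) (delete_rc k (conj_diag n U lam)) \<inter> closed_segment a b"
  then obtain z where unit: "(\<Sum>l<n. (cmod (z l))\<^sup>2) = 1" and orth: "mat_vec n U z k = 0"
    and w: "w = (\<Sum>l<n. (cmod (z l))\<^sup>2 *\<^sub>R lam l)" and "w \<in> closed_segment a b"
    unfolding field_of_values_compression[OF U \<open>k < n\<close>] by blast
  obtain i j where on_side: "{l. l < n \<and> lam l \<in> closed_segment a b} = {i, j}" and "i \<noteq> j"
    using two by (metis card_2_iff)
  then have ij: "i < n" "j < n" "i \<noteq> j"
    by blast+
  have supp: "z l = 0" if "l < n" "l \<noteq> i" "l \<noteq> j" for l
  proof (rule ccontr)
    assume "z l \<noteq> 0"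
    then have "lam l \<in> closed_segment a b"
      using polygon_side_convex_sum_support[OF side, where p = "\<lambda>l. (cmod (z l))\<^sup>2"]
        unit \<open>w \<in> closed_segment a b\<close> \<open>l < n\<close>
      by (simp add: w)
    with on_side that show False
      by blast
  qed
  have "U k i \<noteq> 0" "cmod (U k i) = cmod (U k j)"
    using flat[of i] flat[of j] ij by auto
  then have "w = midpoint (lam i) (lam j)"
    unfolding w using ij unit orth supp by (intro weighted_sum_two_support_eq_midpoint)
  also have "\<dots> = midpoint a b"
    using side on_side by (rule polygon_side_midpoint_of_two_vertices)
  finally show "w \<in> {midpoint a b}"
    by simp
next
  fix w assume "w \<in> {midpoint a b}"
  then show "w \<in> field_of_values (n - 1) (delete_rc k (conj_diag n U lam)) \<inter> closed_segment a b"
    using midpoint_side_mem_field_of_values_compression[OF assms(1-5)] by simp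
qed

section \<open>The discrete Fourier transform matrix\<close>

lemma dft_conj_diag_eq_conj_diag: "dft_conj_diag n lam = conj_diag n (dft_matrix n) lam"
  by (simp add: fun_eq_iff dft_conj_diag_def conj_diag_def)

lemma dft_omega_power_eq_1_iff:
  assumes "n > 0"
  shows "dft_omega n ^ m = 1 \<longleftrightarrow> n dvd m"
proof -
  have "dft_omega n ^ m = inverse (exp (2 * of_real pi * \<i> * of_nat m / of_nat n))"
    unfolding dft_omega_def exp_of_nat_mult [symmetric] exp_minus [symmetric]
    by (simp add: field_simps)
  then show ?thesis
    using complex_root_unity_eq_1[of n m] assms by simp
qed

lemma cnj_dft_omega_power:
  assumes "n > 0" "j \<le> n"
  shows "cnj (dft_omega n ^ j) = dft_omega n ^ (n - j)"
proof -
  have "cmod (dft_omega n ^ j) = 1"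
    by (simp add: dft_omega_def norm_power)
  then have "dft_omega n ^ j * cnj (dft_omega n ^ j) = 1"
    by (metis complex_norm_square of_real_1 one_power2)
  moreover have "dft_omega n ^ j * dft_omega n ^ (n - j) = 1"
    using assms by (simp add: dft_omega_power_eq_1_iff flip: power_add)
  ultimately show ?thesis
    by (metis mult.left_commute mult.right_neutral mult.commute)
qed

lemma norm_dft_matrix: "cmod (dft_matrix n i j) = 1 / sqrt n"
  by (simp add: dft_matrix_def dft_omega_def norm_divide norm_power)

lemma dvd_add_diff_iff:
  fixes i j n :: nat
  assumes "i < n" "j < n"
  shows "n dvd i + (n - j) \<longleftrightarrow> i = j"
proof (cases "j \<le> i")
  case True
  show ?thesis
  proof
    assume "n dvd i + (n - j)"
    moreover have "i + (n - j) = (i - j) + n"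
      using assms True by simp
    ultimately have "n dvd i - j"
      by simp
    moreover have "i - j < n"
      using assms by linarith
    ultimately have "i - j = 0"
      by (metis gr0I nat_dvd_not_less)
    with True show "i = j"
      by simp
  qed (use assms in simp)
next
  case False
  then show ?thesis
    using assms nat_dvd_not_less[of "i + (n - j)" n] by simp
qed

lemma dft_matrix_rows_orthonormal:
  assumes "i < n" "j < n"
  shows "(\<Sum>l<n. dft_matrix n i l * cnj (dft_matrix n j l)) = of_bool (i = j)"
proof -
  have "n > 0"
    using assms by simp
  \<comment> \<open>\<open>\<zeta> = \<omega>\<^sup>i\<^sup>-\<^sup>j\<close>, with the exponent kept in \<open>nat\<close>\<close>
  define \<zeta> where "\<zeta> = dft_omega n ^ (i + (n - j))"
  have "dft_matrix n i l * cnj (dft_matrix n j l) = \<zeta> ^ l / of_nat n" for l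
  proof -
    have "cnj (dft_omega n ^ (j * l)) = dft_omega n ^ ((n - j) * l)"
      using cnj_dft_omega_power[OF \<open>n > 0\<close>, of j] assms
      by (simp only: power_mult complex_cnj_power less_imp_le)
    then have "dft_omega n ^ (i * l) * cnj (dft_omega n ^ (j * l)) = \<zeta> ^ l"
      unfolding \<zeta>_def by (simp only: power_add power_mult_distrib power_mult)
    moreover have "complex_of_real (sqrt n) * cnj (complex_of_real (sqrt n)) = of_nat n"
      by (simp flip: of_real_mult)
    ultimately show ?thesis
      unfolding dft_matrix_def by (simp add: field_simps)
  qed
  then have "(\<Sum>l<n. dft_matrix n i l * cnj (dft_matrix n j l)) = (\<Sum>l<n. \<zeta> ^ l) / of_nat n"
    by (simp add: sum_divide_distrib)
  moreover have "\<zeta> ^ n = 1"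
    unfolding \<zeta>_def power_mult [symmetric] using \<open>n > 0\<close> by (simp add: dft_omega_power_eq_1_iff)
  moreover have "n dvd i + (n - j) \<longleftrightarrow> i = j"
    using assms by (rule dvd_add_diff_iff)
  then have "\<zeta> = 1 \<longleftrightarrow> i = j"
    unfolding \<zeta>_def using dft_omega_power_eq_1_iff[OF \<open>n > 0\<close>] by simp
  ultimately show ?thesis
    using \<open>n > 0\<close> by (simp add: sum_gp_strict)
qed

lemma dft_matrix_commute: "dft_matrix n i j = dft_matrix n j i"
  unfolding dft_matrix_def by (simp add: mult.commute)

lemma unitary_dft_matrix: "unitary_mat n (dft_matrix n)"
  unfolding unitary_mat_def
proof (intro allI impI conjI)
  fix i j assume "i < n" "j < n"
  then show rows: "(\<Sum>l<n. dft_matrix n i l * cnj (dft_matrix n j l)) = of_bool (i = j)"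
    by (rule dft_matrix_rows_orthonormal)
  have "(\<Sum>l<n. cnj (dft_matrix n l i) * dft_matrix n l j) = (\<Sum>l<n. cnj (dft_matrix n i l) * dft_matrix n j l)"
    by (intro sum.cong refl) (metis dft_matrix_commute)
  also have "\<dots> = cnj (\<Sum>l<n. dft_matrix n i l * cnj (dft_matrix n j l))"
    by simp
  finally show "(\<Sum>l<n. cnj (dft_matrix n l i) * dft_matrix n l j) = of_bool (i = j)"
    unfolding rows by simp
qed

theorem mainTheorem4:
  fixes n k :: nat and lam :: "nat \<Rightarrow> complex"
  assumes "n \<ge> 2" and "k < n"
  shows "\<forall>a b. polygon_side (convex hull (lam ` {..<n})) a b \<longrightarrow>
           field_of_values (n - 1) (delete_rc k (dft_conj_diag n lam)) \<inter> closed_segment a b \<noteq> {} \<and>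
           midpoint a b \<in> field_of_values (n - 1) (delete_rc k (dft_conj_diag n lam)) \<and>
           (card {i. i < n \<and> lam i \<in> closed_segment a b} = 2 \<longrightarrow>
              field_of_values (n - 1) (delete_rc k (dft_conj_diag n lam)) \<inter> closed_segment a b
                = {midpoint a b})"
  unfolding dft_conj_diag_eq_conj_diag
proof (intro allI impI conjI)
  fix a b assume side: "polygon_side (convex hull (lam ` {..<n})) a b"
  note compression = unitary_dft_matrix assms norm_dft_matrix side
  show "midpoint a b \<in> field_of_values (n - 1) (delete_rc k (conj_diag n (dft_matrix n) lam))"
    by (rule midpoint_side_mem_field_of_values_compression[OF compression])
  then show "field_of_values (n - 1) (delete_rc k (conj_diag n (dft_matrix n) lam)) \<inter> closed_segment a b \<noteq> {}"
    using midpoint_in_closed_segment by blast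
  show "field_of_values (n - 1) (delete_rc k (conj_diag n (dft_matrix n) lam)) \<inter> closed_segment a b
          = {midpoint a b}"
    if "card {i. i < n \<and> lam i \<in> closed_segment a b} = 2"
    using field_of_values_compression_inter_side[OF compression that] .
qed

end
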